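(* Let $(\mathcal A,\mathcal A_0)$ be an admissible $\mathcal T$-semiring pair and let $S\subseteq\mathcal T$ be a multiplicatively closed subset with $\mathbb 0\notin S$. Put $\hat S=(S\times\{\mathbb 0\})\cup(\{\mathbb 0\}\times S)\subseteq\mathcal A\times\mathcal A$. Then there exists a prime congruence on $\mathcal A$ disjoint from $\hat S$.
   Context: $\mathcal T$ is a multiplicative monoid. An admissible $\mathcal T$-semiring pair $(\mathcal A,\mathcal A_0)$ consists of a semiring $\mathcal A$ containing $\mathcal T$ as a multiplicative submonoid, additively generated by $\mathcal T\cup\{\mathbb 0\}$, and a subset $\mathcal A_0\subseteq\mathcal A$ containing $\mathbb 0$, closed under addition and under multiplication by $\mathcal T$, with $\mathcal A_0\cap\mathcal T=\emptyset$. A congruence on $\mathcal A$ is an equivalence relation on $\mathcal A$ closed (as a subset of $\mathcal A\times\mathcal A$) under componentwise addition and multiplication. The twist product is $(a_1,a_1')\cdot_{tw}(a_2,a_2')=(a_1a_2+a_1'a_2',\ a_1a_2'+a_1'a_2)$; for congruences $\Phi_1,\Phi_2$, $\Phi_1\cdot_{tw}\Phi_2$ is the set of twist products of an element of $\Phi_1$ with an element of $\Phi_2$. A congruence $\Phi$ is prime if for all congruences $\Phi_1,\Phi_2\supseteq\Phi$ with $\Phi_1\cdot_{tw}\Phi_2\subseteq\Phi$ one has $\Phi_1=\Phi$ or $\Phi_2=\Phi$. *)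

theory Defs
  imports Main
begin

text \<open>The semiring \<A> is the whole type 'a (a commutative semiring with 0 and 1).
  \<T> and \<A>0 are subsets of it.\<close>

definition admissible_pair :: "'a::comm_semiring_1 set \<Rightarrow> 'a set \<Rightarrow> bool" where
  "admissible_pair T A0 \<longleftrightarrow>
     \<comment> \<open>\<T> is a multiplicative submonoid\<close>
     1 \<in> T \<and> (\<forall>s\<in>T. \<forall>t\<in>T. s * t \<in> T) \<and>
     \<comment> \<open>\<A> is additively generated by \<T> \<union> {0}\<close>
     (\<forall>a. \<exists>xs. set xs \<subseteq> insert 0 T \<and> a = sum_list xs) \<and>
     \<comment> \<open>conditions on \<A>0\<close>
     0 \<in> A0 \<and> (\<forall>a\<in>A0. \<forall>b\<in>A0. a + b \<in> A0) \<and> (\<forall>t\<in>T. \<forall>a\<in>A0. t * a \<in> A0) \<and>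
     A0 \<inter> T = {}"

definition congruence :: "('a::comm_semiring_1 \<times> 'a) set \<Rightarrow> bool" where
  "congruence \<Phi> \<longleftrightarrow> equiv UNIV \<Phi> \<and>
     (\<forall>a b c d. (a, b) \<in> \<Phi> \<longrightarrow> (c, d) \<in> \<Phi> \<longrightarrow> (a + c, b + d) \<in> \<Phi> \<and> (a * c, b * d) \<in> \<Phi>)"

definition twist :: "'a::comm_semiring_1 \<times> 'a \<Rightarrow> 'a \<times> 'a \<Rightarrow> 'a \<times> 'a" where
  "twist p q = (fst p * fst q + snd p * snd q, fst p * snd q + snd p * fst q)"

definition twist_set :: "('a::comm_semiring_1 \<times> 'a) set \<Rightarrow> ('a \<times> 'a) set \<Rightarrow> ('a \<times> 'a) set" where
  "twist_set \<Phi>1 \<Phi>2 = {twist p q | p q. p \<in> \<Phi>1 \<and> q \<in> \<Phi>2}"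

definition prime_congruence :: "('a::comm_semiring_1 \<times> 'a) set \<Rightarrow> bool" where
  "prime_congruence \<Phi> \<longleftrightarrow> congruence \<Phi> \<and>
     (\<forall>\<Phi>1 \<Phi>2. congruence \<Phi>1 \<longrightarrow> congruence \<Phi>2 \<longrightarrow> \<Phi> \<subseteq> \<Phi>1 \<longrightarrow> \<Phi> \<subseteq> \<Phi>2 \<longrightarrow>
        twist_set \<Phi>1 \<Phi>2 \<subseteq> \<Phi> \<longrightarrow> \<Phi>1 = \<Phi> \<or> \<Phi>2 = \<Phi>)"

definition S_hat :: "'a::comm_semiring_1 set \<Rightarrow> ('a \<times> 'a) set" where
  "S_hat S = (S \<times> {0}) \<union> ({0} \<times> S)"

end

theory Submission
  imports Defs
begin

text \<open>The congruences disjoint from \<open>S_hat S\<close> form an inductive family containing the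
  diagonal, so Zorn's lemma yields a maximal one \<open>\<Phi>\<close>. It is prime: if congruences
  \<open>\<Phi>\<^sub>1, \<Phi>\<^sub>2 \<supset> \<Phi>\<close> with \<open>\<Phi>\<^sub>1 \<cdot>\<^sub>t\<^sub>w \<Phi>\<^sub>2 \<subseteq> \<Phi>\<close> both properly contain \<open>\<Phi>\<close>, by maximality
  they meet \<open>S_hat S\<close> in some \<open>p\<close> and \<open>q\<close>, and since \<open>S\<close> is multiplicatively closed the
  twist product of \<open>p\<close> and \<open>q\<close> lies again in \<open>S_hat S\<close>, and also in \<open>\<Phi>\<close>.\<close>

lemma congruence_Id: "congruence (Id :: ('a::comm_semiring_1 \<times> 'a) set)"
  unfolding congruence_def by (simp add: equiv_def refl_on_def sym_def trans_def)

lemma chain_Union_common_member: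
  assumes chain: "\<And>X Y. X \<in> C \<Longrightarrow> Y \<in> C \<Longrightarrow> X \<subseteq> Y \<or> Y \<subseteq> X"
    and "x \<in> \<Union>C" and "y \<in> \<Union>C"
  obtains Z where "Z \<in> C" "x \<in> Z" "y \<in> Z"
proof -
  from assms(2,3) obtain X Y where "X \<in> C" "Y \<in> C" "x \<in> X" "y \<in> Y" by blast
  with chain[of X Y] that show thesis by blast
qed

lemma congruence_Union_chain:
  assumes "C \<noteq> {}" and cong: "\<And>X. X \<in> C \<Longrightarrow> congruence X"
    and chain: "\<And>X Y. X \<in> C \<Longrightarrow> Y \<in> C \<Longrightarrow> X \<subseteq> Y \<or> Y \<subseteq> X"
  shows "congruence (\<Union>C)"
proof -
  from \<open>C \<noteq> {}\<close> obtain X0 where "X0 \<in> C" by blast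
  then have "refl_on UNIV (\<Union>C)"
    using cong unfolding congruence_def equiv_def refl_on_def by blast
  moreover have "sym (\<Union>C)"
    using cong unfolding congruence_def equiv_def sym_def by blast
  moreover have "trans (\<Union>C)"
  proof (rule transI)
    fix x y z assume "(x, y) \<in> \<Union>C" "(y, z) \<in> \<Union>C"
    then obtain Z where "Z \<in> C" "(x, y) \<in> Z" "(y, z) \<in> Z"
      using chain_Union_common_member[OF chain] by blast
    moreover from \<open>Z \<in> C\<close> have "trans Z"
      using cong unfolding congruence_def equiv_def by blast
    ultimately show "(x, z) \<in> \<Union>C"
      by (meson UnionI transD)
  qed
  moreover have "(a + c, b + d) \<in> \<Union>C \<and> (a * c, b * d) \<in> \<Union>C"
    if "(a, b) \<in> \<Union>C" "(c, d) \<in> \<Union>C" for a b c d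
  proof -
    from that obtain Z where "Z \<in> C" "(a, b) \<in> Z" "(c, d) \<in> Z"
      using chain_Union_common_member[OF chain] by blast
    with cong[OF \<open>Z \<in> C\<close>] show ?thesis
      unfolding congruence_def by blast
  qed
  ultimately show ?thesis
    unfolding congruence_def equiv_def by simp
qed

lemma exists_maximal_congruence_disjoint:
  fixes D :: "('a::comm_semiring_1 \<times> 'a) set"
  assumes "Id \<inter> D = {}"
  obtains \<Phi> where "congruence \<Phi>" "\<Phi> \<inter> D = {}"
    "\<And>\<Psi>. congruence \<Psi> \<Longrightarrow> \<Psi> \<inter> D = {} \<Longrightarrow> \<Phi> \<subseteq> \<Psi> \<Longrightarrow> \<Psi> = \<Phi>"
proof -
  define F where "F = {\<Phi>. congruence \<Phi> \<and> \<Phi> \<inter> D = {}}"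
  have "Id \<in> F"
    using assms congruence_Id unfolding F_def by blast
  then have "\<exists>\<Phi>\<in>F. \<forall>\<Psi>\<in>F. \<Phi> \<subseteq> \<Psi> \<longrightarrow> \<Psi> = \<Phi>"
  proof (intro subset_Zorn_nonempty)
    fix C assume "C \<noteq> {}" and "subset.chain F C"
    then have "C \<subseteq> F" and "\<And>X Y. X \<in> C \<Longrightarrow> Y \<in> C \<Longrightarrow> X \<subseteq> Y \<or> Y \<subseteq> X"
      by (auto simp: subset_chain_def)
    then have "congruence (\<Union>C)"
      using congruence_Union_chain[OF \<open>C \<noteq> {}\<close>] unfolding F_def by blast
    with \<open>C \<subseteq> F\<close> show "\<Union>C \<in> F"
      unfolding F_def by blast
  qed blast
  then obtain \<Phi> where "\<Phi> \<in> F" and "\<forall>\<Psi>\<in>F. \<Phi> \<subseteq> \<Psi> \<longrightarrow> \<Psi> = \<Phi>"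
    by blast
  then show thesis
    by (intro that) (auto simp: F_def)
qed

lemma maximal_congruence_disjoint_twist_closed_prime:
  assumes "congruence \<Phi>" and "\<Phi> \<inter> D = {}"
    and maximal: "\<And>\<Psi>. congruence \<Psi> \<Longrightarrow> \<Psi> \<inter> D = {} \<Longrightarrow> \<Phi> \<subseteq> \<Psi> \<Longrightarrow> \<Psi> = \<Phi>"
    and twist_closed: "\<And>p q. p \<in> D \<Longrightarrow> q \<in> D \<Longrightarrow> twist p q \<in> D"
  shows "prime_congruence \<Phi>"
  unfolding prime_congruence_def
proof (intro conjI assms(1) allI impI)
  fix \<Phi>1 \<Phi>2
  assume "congruence \<Phi>1" "congruence \<Phi>2" "\<Phi> \<subseteq> \<Phi>1" "\<Phi> \<subseteq> \<Phi>2"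
    and twist_le: "twist_set \<Phi>1 \<Phi>2 \<subseteq> \<Phi>"
  show "\<Phi>1 = \<Phi> \<or> \<Phi>2 = \<Phi>"
  proof (rule ccontr)
    assume "\<not> (\<Phi>1 = \<Phi> \<or> \<Phi>2 = \<Phi>)"
    then have "\<Phi>1 \<inter> D \<noteq> {}" "\<Phi>2 \<inter> D \<noteq> {}"
      using maximal \<open>congruence \<Phi>1\<close> \<open>congruence \<Phi>2\<close> \<open>\<Phi> \<subseteq> \<Phi>1\<close> \<open>\<Phi> \<subseteq> \<Phi>2\<close> by blast+
    then obtain p q where "p \<in> \<Phi>1" "p \<in> D" "q \<in> \<Phi>2" "q \<in> D" by blast
    then have "twist p q \<in> \<Phi> \<inter> D"
      using twist_le twist_closed unfolding twist_set_def by blast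
    with \<open>\<Phi> \<inter> D = {}\<close> show False by blast
  qed
qed

lemma twist_S_hat:
  assumes "\<forall>s\<in>S. \<forall>t\<in>S. s * t \<in> S" and "p \<in> S_hat S" and "q \<in> S_hat S"
  shows "twist p q \<in> S_hat S"
  using assms unfolding S_hat_def twist_def by auto

lemma Id_disjoint_S_hat: "0 \<notin> S \<Longrightarrow> Id \<inter> S_hat S = {}"
  unfolding S_hat_def by auto

theorem mainTheorem6:
  fixes T A0 S :: "'a::comm_semiring_1 set"
  assumes "admissible_pair T A0"
    and "S \<subseteq> T"
    and "\<forall>s\<in>S. \<forall>t\<in>S. s * t \<in> S"
    and "0 \<notin> S"
  shows "\<exists>\<Phi>. prime_congruence \<Phi> \<and> \<Phi> \<inter> S_hat S = {}"
proof -
  obtain \<Phi> where "congruence \<Phi>" "\<Phi> \<inter> S_hat S = {}"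
    and "\<And>\<Psi>. congruence \<Psi> \<Longrightarrow> \<Psi> \<inter> S_hat S = {} \<Longrightarrow> \<Phi> \<subseteq> \<Psi> \<Longrightarrow> \<Psi> = \<Phi>"
    using exists_maximal_congruence_disjoint[OF Id_disjoint_S_hat[OF assms(4)]] by blast
  then have "prime_congruence \<Phi>"
    using maximal_congruence_disjoint_twist_closed_prime twist_S_hat[OF assms(3)] by blast
  with \<open>\<Phi> \<inter> S_hat S = {}\<close> show ?thesis by blast
qed

end
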